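(* Let $d\ge1$ and let $D$ be a Newton diagram in $2$ variables whose support is exactly $\{(a,b)\in\mathbb N_0^2: a+b<d\}$. Then there exists a Newton diagram $\tilde D$ with the same support such that $\tilde D(a,b)=D(a,b)$ for all $(a,b)$ with $a+b=d-1$, and $SC(\tilde D)=\frac{d+1}{2}$.
   Context: For $m\in\mathbb Z^n$ write $|m|=m_1+\dots+m_n$; $e_1,\dots,e_n$ is the standard basis. A Newton diagram in $n$ variables is a function $D\colon\mathbb Z^n\to\{0,P,N\}$ ($P,N$ formal symbols) whose support $K=D^{-1}(\{P,N\})$ is a finite nonempty subset of $\mathbb N_0^n$. For $a\in\mathbb Z^n$ let $E(a)=\{a,a-e_1,\dots,a-e_n\}$; $E(a)$ is a node of $D$ if the image $D(E(a))$ equals $\{P\}$, $\{N\}$, $\{0,P\}$ or $\{0,N\}$. For $n=2$: a node $E(a)$ is an interior node if no point of $E(a)$ has $D$-value $0$, an edge node if exactly one does, a vertex node if exactly two do; a vertex node is a bottom node if its two $0$-points are $a-e_1$ and $a-e_2$. The weighted surface count is $SC(D)=(\#\text{interior nodes})+\tfrac12\big((\#\text{edge nodes})+(\#\text{vertex nodes})-(\#\text{bottom nodes})\big)$. *)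

theory Defs
  imports Complex_Main
begin

datatype sgn = Zero | P | N

type_synonym pt = "int \<times> int"

definition support :: "(pt \<Rightarrow> sgn) \<Rightarrow> pt set" where
  "support D = {x. D x \<noteq> Zero}"

definition newton_diagram :: "(pt \<Rightarrow> sgn) \<Rightarrow> bool" where
  "newton_diagram D \<longleftrightarrow> finite (support D) \<and> support D \<noteq> {}
     \<and> (\<forall>(a,b)\<in>support D. a \<ge> 0 \<and> b \<ge> 0)"

definition E :: "pt \<Rightarrow> pt set" where
  "E p = {p, (fst p - 1, snd p), (fst p, snd p - 1)}"

definition is_node :: "(pt \<Rightarrow> sgn) \<Rightarrow> pt \<Rightarrow> bool" where
  "is_node D p \<longleftrightarrow> D ` E p \<in> {{P}, {N}, {Zero, P}, {Zero, N}}"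

definition zero_pts :: "(pt \<Rightarrow> sgn) \<Rightarrow> pt \<Rightarrow> pt set" where
  "zero_pts D p = {x \<in> E p. D x = Zero}"

definition interior_nodes :: "(pt \<Rightarrow> sgn) \<Rightarrow> pt set" where
  "interior_nodes D = {p. is_node D p \<and> card (zero_pts D p) = 0}"

definition edge_nodes :: "(pt \<Rightarrow> sgn) \<Rightarrow> pt set" where
  "edge_nodes D = {p. is_node D p \<and> card (zero_pts D p) = 1}"

definition vertex_nodes :: "(pt \<Rightarrow> sgn) \<Rightarrow> pt set" where
  "vertex_nodes D = {p. is_node D p \<and> card (zero_pts D p) = 2}"

definition bottom_nodes :: "(pt \<Rightarrow> sgn) \<Rightarrow> pt set" where
  "bottom_nodes D = {p \<in> vertex_nodes D.
      zero_pts D p = {(fst p - 1, snd p), (fst p, snd p - 1)}}"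

definition SC :: "(pt \<Rightarrow> sgn) \<Rightarrow> real" where
  "SC D = real (card (interior_nodes D))
     + (real (card (edge_nodes D)) + real (card (vertex_nodes D))
        - real (card (bottom_nodes D))) / 2"

end

theory Submission
  imports Defs
begin

(* The new diagram keeps the top row a + b = d - 1 of D and, going down
   each horizontal line b = const, alternates the sign at every step to the left.
   Then two horizontally adjacent points of the triangle always carry different
   signs, so no node can contain both of them.  This kills all interior nodes and
   all edge nodes on the bottom side; on every row 1 <= b < d there is exactly one
   edge node, on the left side (if the top-row signs at heights b and b - 1 differ)
   or on the hypotenuse (if they agree).  The three corners are vertex nodes, only
   (0,0) being a bottom node, so SC = (d - 1)/2 + (3 - 1)/2 = (d + 1)/2. *)

lemma zero_pts_card:
  "card (zero_pts F (a, b)) =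
     of_bool (F (a, b) = Zero) + of_bool (F (a - 1, b) = Zero) + of_bool (F (a, b - 1) = Zero)"
  unfolding zero_pts_def E_def Collect_conj_eq Collect_mem_eq
  by (simp add: Int_insert_left card_insert_if)

lemma is_node_iff:
  "is_node F p \<longleftrightarrow> (\<exists>x\<in>E p. F x \<noteq> Zero)
     \<and> (\<forall>x\<in>E p. \<forall>y\<in>E p. F x \<noteq> Zero \<longrightarrow> F y \<noteq> Zero \<longrightarrow> F x = F y)"
proof -
  obtain u v w where "E p = {u, v, w}" unfolding E_def by blast
  then show ?thesis unfolding is_node_def
    by (cases "F u"; cases "F v"; cases "F w") (auto simp: insert_commute doubleton_eq_iff)
qed

(* A vertex node E(p) is a bottom node exactly when D(p) is nonzero, since then its two
   zero points can only be p - e1 and p - e2. *)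
lemma bottom_node_iff: "bottom_nodes F = {p \<in> vertex_nodes F. F p \<noteq> Zero}"
proof -
  have key: "zero_pts F p = {(fst p - 1, snd p), (fst p, snd p - 1)} \<longleftrightarrow> F p \<noteq> Zero"
    if "card (zero_pts F p) = 2" for p
  proof
    assume "zero_pts F p = {(fst p - 1, snd p), (fst p, snd p - 1)}"
    moreover have "p \<notin> {(fst p - 1, snd p), (fst p, snd p - 1)}" by (cases p) auto
    ultimately show "F p \<noteq> Zero" unfolding zero_pts_def E_def by auto
  next
    assume "F p \<noteq> Zero"
    then have "zero_pts F p \<subseteq> {(fst p - 1, snd p), (fst p, snd p - 1)}"
      unfolding zero_pts_def E_def by auto
    moreover have "card {(fst p - 1, snd p), (fst p, snd p - 1)} = 2" by simp
    ultimately show "zero_pts F p = {(fst p - 1, snd p), (fst p, snd p - 1)}"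
      using that by (metis card_subset_eq finite.emptyI finite.insertI)
  qed
  show ?thesis unfolding bottom_nodes_def vertex_nodes_def
    by (rule Collect_cong) (use key in blast)
qed

definition triangle :: "nat \<Rightarrow> pt set" where
  "triangle d = {(a, b). 0 \<le> a \<and> 0 \<le> b \<and> a + b < int d}"

context
  fixes d :: nat and F :: "pt \<Rightarrow> sgn"
  assumes d_pos: "1 \<le> d" and supp: "support F = triangle d"
begin

lemma triangle_zero_iff: "F (a, b) = Zero \<longleftrightarrow> \<not> (0 \<le> a \<and> 0 \<le> b \<and> a + b < int d)"
  using supp unfolding support_def triangle_def by blast

lemma triangle_vertex_nodes: "vertex_nodes F = {(0, 0), (int d, 0), (0, int d)}"
proof -
  have "is_node F (a, b) \<and> card (zero_pts F (a, b)) = 2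
          \<longleftrightarrow> (a, b) \<in> {(0, 0), (int d, 0), (0, int d)}" for a b
    unfolding is_node_iff E_def zero_pts_card using d_pos by (auto simp: triangle_zero_iff)
  then show ?thesis unfolding vertex_nodes_def by auto
qed

lemma triangle_bottom_nodes: "bottom_nodes F = {(0, 0)}"
  unfolding bottom_node_iff triangle_vertex_nodes using d_pos by (auto simp: triangle_zero_iff)

lemma one_zero_point_iff:
  "card (zero_pts F (a, b)) = 1 \<longleftrightarrow>
     (b = 0 \<and> 1 \<le> a \<and> a < int d) \<or> (1 \<le> b \<and> b < int d \<and> (a = 0 \<or> a = int d - b))"
  unfolding zero_pts_card by (auto simp: triangle_zero_iff)

end

fun flip :: "sgn \<Rightarrow> sgn" where
  "flip Zero = Zero" | "flip P = N" | "flip N = P"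

definition alternating :: "nat \<Rightarrow> (int \<Rightarrow> sgn) \<Rightarrow> pt \<Rightarrow> sgn" where
  "alternating d s p =
     (if p \<in> triangle d
      then (if even (int d - 1 - fst p - snd p) then s (snd p) else flip (s (snd p)))
      else Zero)"

(* The unique edge node at height b: on the left side if the top-row signs at heights
   b and b - 1 differ, just beyond the hypotenuse otherwise. *)
definition row_edge_node :: "nat \<Rightarrow> (int \<Rightarrow> sgn) \<Rightarrow> int \<Rightarrow> pt" where
  "row_edge_node d s b = (if s b \<noteq> s (b - 1) then (0, b) else (int d - b, b))"

context
  fixes d :: nat and s :: "int \<Rightarrow> sgn"
  assumes d_pos: "1 \<le> d" and s_nonzero: "\<And>b. 0 \<le> b \<Longrightarrow> b < int d \<Longrightarrow> s b \<noteq> Zero"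
begin

abbreviation Alt :: "pt \<Rightarrow> sgn" where "Alt \<equiv> alternating d s"

lemma alternating_support: "support Alt = triangle d"
proof -
  have "s b \<noteq> Zero" if "(a, b) \<in> triangle d" for a b
    using that s_nonzero by (auto simp: triangle_def)
  then show ?thesis
    unfolding support_def alternating_def by (auto elim: flip.elims)
qed

lemma alternating_row_step:
  assumes "0 \<le> b" and "1 \<le> a" and "a + b < int d"
  shows "Alt (a - 1, b) \<noteq> Alt (a, b)"
proof -
  have "int d - 1 - (a - 1) - b = (int d - 1 - a - b) + 1" by simp
  moreover have "s b \<noteq> Zero" using assms s_nonzero by simp
  ultimately show ?thesis
    using assms unfolding alternating_def triangle_def by (cases "s b") auto
qed

lemma alternating_hypotenuse:
  assumes "0 \<le> a" and "0 \<le> b" and "a + b = int d - 1"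
  shows "Alt (a, b) = s b"
proof -
  have on_top_row: "int d - 1 - a - b = 0" using assms by simp
  have "(a, b) \<in> triangle d" using assms by (simp add: triangle_def)
  then show ?thesis unfolding alternating_def fst_conv snd_conv on_top_row by simp
qed

(* On the left side, the two signs at heights b and b - 1 agree iff the top-row signs
   differ, since the two points lie at distances of different parity from the top row. *)
lemma alternating_left_column:
  assumes "1 \<le> b" and "b < int d"
  shows "Alt (0, b) = Alt (0, b - 1) \<longleftrightarrow> s b \<noteq> s (b - 1)"
proof -
  have "int d - 1 - 0 - (b - 1) = (int d - 1 - 0 - b) + 1" by simp
  moreover have "s b \<noteq> Zero" "s (b - 1) \<noteq> Zero" using assms s_nonzero by simp_all
  ultimately show ?thesis
    using assms unfolding alternating_def triangle_def by (cases "s b"; cases "s (b - 1)") auto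
qed

lemma alternating_zero_iff: "Alt (a, b) = Zero \<longleftrightarrow> \<not> (0 \<le> a \<and> 0 \<le> b \<and> a + b < int d)"
  by (rule triangle_zero_iff[OF d_pos alternating_support])

(* An interior node would contain two horizontal neighbours of the triangle. *)
lemma alternating_interior_nodes: "interior_nodes Alt = {}"
proof -
  have "\<not> is_node Alt (a, b)" if "card (zero_pts Alt (a, b)) = 0" for a b
  proof -
    have "0 \<le> b" "1 \<le> a" "a + b < int d" "Alt (a, b) \<noteq> Zero" "Alt (a - 1, b) \<noteq> Zero"
      using that by (auto simp: zero_pts_card alternating_zero_iff)
    then show ?thesis
      using alternating_row_step[of b a] by (auto simp: is_node_iff E_def)
  qed
  then show ?thesis unfolding interior_nodes_def by auto
qed

lemma alternating_edge_node_iff: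
  assumes "card (zero_pts Alt (a, b)) = 1"
  shows "is_node Alt (a, b) \<longleftrightarrow> 1 \<le> b \<and> (a, b) = row_edge_node d s b"
proof -
  have "(b = 0 \<and> 1 \<le> a \<and> a < int d) \<or> (1 \<le> b \<and> b < int d \<and> (a = 0 \<or> a = int d - b))"
    using assms one_zero_point_iff[OF d_pos alternating_support] by simp
  then show ?thesis
  proof (elim disjE conjE)
    assume "b = 0" "1 \<le> a" "a < int d"
    then show ?thesis
      using alternating_row_step[of b a]
      by (auto simp: is_node_iff E_def alternating_zero_iff)
  next
    assume "1 \<le> b" "b < int d" "a = 0"
    then show ?thesis
      using alternating_left_column[of b]
      by (auto simp: is_node_iff E_def alternating_zero_iff row_edge_node_def)
  next
    assume "1 \<le> b" "b < int d" "a = int d - b"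
    then show ?thesis
      using alternating_hypotenuse[of "a - 1" b]
        alternating_hypotenuse[of a "b - 1"]
      by (auto simp: is_node_iff E_def alternating_zero_iff row_edge_node_def)
  qed
qed

lemma alternating_edge_nodes: "edge_nodes Alt = row_edge_node d s ` {1..<int d}"
proof -
  have "(a, b) \<in> edge_nodes Alt \<longleftrightarrow> 1 \<le> b \<and> b < int d \<and> (a, b) = row_edge_node d s b" for a b
    using alternating_edge_node_iff[of a b] one_zero_point_iff[OF d_pos alternating_support, of a b]
    unfolding edge_nodes_def row_edge_node_def by auto
  moreover have "snd (row_edge_node d s b) = b" for b
    by (simp add: row_edge_node_def)
  ultimately show ?thesis by (auto simp: image_iff) (metis prod.collapse)
qed

lemma alternating_edge_count: "card (edge_nodes Alt) = d - 1"
proof -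
  have "inj_on (row_edge_node d s) {1..<int d}"
    by (rule inj_on_inverseI[where g = snd]) (simp add: row_edge_node_def)
  then show ?thesis unfolding alternating_edge_nodes by (simp add: card_image)
qed

lemma alternating_SC: "SC Alt = (real d + 1) / 2"
proof -
  have "card (vertex_nodes Alt) = 3"
    using d_pos unfolding triangle_vertex_nodes[OF d_pos alternating_support] by simp
  moreover have "card (bottom_nodes Alt) = 1"
    unfolding triangle_bottom_nodes[OF d_pos alternating_support] by simp
  ultimately show ?thesis
    unfolding SC_def alternating_interior_nodes alternating_edge_count using d_pos
    by (simp add: of_nat_diff)
qed

end

theorem mainTheorem9:
  fixes d :: nat and D :: "pt \<Rightarrow> sgn"
  assumes "d \<ge> 1"
    and "newton_diagram D"
    and "support D = {(a, b). a \<ge> 0 \<and> b \<ge> 0 \<and> a + b < int d}"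
  shows "\<exists>D'. newton_diagram D' \<and> support D' = support D
           \<and> (\<forall>a b. a \<ge> 0 \<and> b \<ge> 0 \<and> a + b = int d - 1 \<longrightarrow> D' (a, b) = D (a, b))
           \<and> SC D' = (real d + 1) / 2"
proof -
  define s where "s b = D (int d - 1 - b, b)" for b
  have supp: "support D = triangle d"
    using assms(3) by (simp add: triangle_def)
  have s_nonzero: "s b \<noteq> Zero" if "0 \<le> b" "b < int d" for b
  proof -
    have "(int d - 1 - b, b) \<in> support D"
      using supp that by (simp add: triangle_def)
    then show ?thesis by (simp add: s_def support_def)
  qed
  let ?D' = "alternating d s"
  have same_support: "support ?D' = support D"
    using alternating_support[of d s, OF assms(1) s_nonzero] supp by simp
  then have "newton_diagram ?D'"
    using assms(2) unfolding newton_diagram_def by simp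
  moreover have "?D' (a, b) = D (a, b)" if "0 \<le> a" "0 \<le> b" "a + b = int d - 1" for a b
  proof -
    have "int d - 1 - b = a" using that by simp
    then show ?thesis
      using alternating_hypotenuse[of d s, OF assms(1) s_nonzero that] by (simp add: s_def)
  qed
  ultimately show ?thesis
    using same_support alternating_SC[of d s, OF assms(1) s_nonzero] by blast
qed

end
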